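(* Consider the Kakutani interval splitting process with cutoff $x_c\in(0,1)$: start with $(0,1)$; at each step the current largest subinterval is split into two pieces by a division point uniformly distributed in it (independently of the past); subintervals of length at most $x_c$ are not split further, and the process stops when all subintervals have length at most $x_c$; let $n$ be the total number of splits. Fix $y\in(0,1)$ and let $K$ be the number of splits, during the process, of a subinterval containing the point $y$ (the "$y$-subintervals") before the subinterval containing $y$ has length at most $x_c$. Then, with high probability, $K=\sim\!\log n$, i.e. $K$ is at most of order $\log n$ (equivalently of order $\log(1/x_c)$): for every $A>0$ there is a constant $C_A$ such that $K\le C_A\log(1/x_c)$ except on an event of probability at most of order $x_c^{A}$.
   Context: The process ends with $n+1$ subintervals all of length at most $x_c$, and $1/x_c$ is of the same order as $n$ (up to constants), so $\log n$ and $\log(1/x_c)$ are comparable; asymptotics are as $x_c\to0$. *)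

theory Defs
  imports "HOL-Probability.Probability"
begin

text \<open>At step j the current largest subinterval (a,b) (ties broken by list order)
  is split at the point a + u j * (b - a); if u j is uniform on [0,1] and independent
  of the past, this division point is uniform in (a,b).\<close>

definition ilen :: "real \<times> real \<Rightarrow> real" where
  "ilen I = snd I - fst I"

definition largest :: "(real \<times> real) list \<Rightarrow> real \<times> real" where
  "largest S = hd (filter (\<lambda>I. ilen I = Max (ilen ` set S)) S)"

definition stopped :: "real \<Rightarrow> (real \<times> real) list \<Rightarrow> bool" where
  "stopped xc S \<longleftrightarrow> (\<forall>I\<in>set S. ilen I \<le> xc)"

definition split_at :: "real \<Rightarrow> real \<times> real \<Rightarrow> (real \<times> real) list" where
  "split_at t I = [(fst I, fst I + t * ilen I), (fst I + t * ilen I, snd I)]"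

primrec kak_state :: "real \<Rightarrow> (nat \<Rightarrow> real) \<Rightarrow> nat \<Rightarrow> (real \<times> real) list" where
  "kak_state xc u 0 = [(0, 1)]"
| "kak_state xc u (Suc j) =
     (let S = kak_state xc u j in
      if stopped xc S then S
      else remove1 (largest S) S @ split_at (u j) (largest S))"

definition kak_K :: "real \<Rightarrow> real \<Rightarrow> (nat \<Rightarrow> real) \<Rightarrow> nat" where
  "kak_K xc y u = card {j. \<not> stopped xc (kak_state xc u j) \<and>
       fst (largest (kak_state xc u j)) < y \<and> y < snd (largest (kak_state xc u j))}"

end

theory Submission
  imports Defs "HOL-Library.More_List"
begin

(* Give a split at parameter t the weight max t (1 - t): both pieces have length at most this
   weight times the length of the split interval. So after m splits of subintervals containing y,
   the subinterval containing y has length at most the product of their m weights, and it is split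
   again only while this product exceeds x_c. For uniform t the weight has mean at most 7/8, so by
   independence the product of the weights of the first k such splits, divided by (7/8)^k, is a
   nonnegative supermartingale with mean at most 1. Markov's inequality gives
   P(K > k) <= (7/8)^k / x_c, and k of order (A + 1) ln(1/x_c) makes this O(x_c^A). *)

lemma first_filter_elem:
  assumes "i < length xs" "P (xs ! i)" "\<And>j. j < i \<Longrightarrow> \<not> P (xs ! j)"
  shows hd_filter_eq_nth: "hd (filter P xs) = xs ! i"
    and remove1_nth_eq_take_drop: "remove1 (xs ! i) xs = take i xs @ drop (Suc i) xs"
proof -
  have xs: "xs = take i xs @ xs ! i # drop (Suc i) xs"
    using assms(1) by (rule id_take_nth_drop)
  have none: "\<not> P x" if "x \<in> set (take i xs)" for x
    using that assms(1,3) by (auto simp: in_set_conv_nth)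
  then have "filter P (take i xs) = []" by (simp add: filter_empty_conv)
  then show "hd (filter P xs) = xs ! i"
    using assms(2) by (subst xs) simp
  have "xs ! i \<notin> set (take i xs)" using none assms(2) by blast
  then show "remove1 (xs ! i) xs = take i xs @ drop (Suc i) xs"
    by (subst (2) xs) (simp add: remove1_append)
qed

definition largest_index :: "(real \<times> real) list \<Rightarrow> nat" where
  "largest_index S = (LEAST i. i < length S \<and> (\<forall>k<length S. ilen (S ! k) \<le> ilen (S ! i)))"

lemma largest_index:
  assumes "S \<noteq> []"
  shows largest_index_less: "largest_index S < length S"
    and largest_conv_nth: "largest S = S ! largest_index S"
    and remove1_largest:
      "remove1 (largest S) S = take (largest_index S) S @ drop (Suc (largest_index S)) S"
    and ilen_le_largest: "I \<in> set S \<Longrightarrow> ilen I \<le> ilen (largest S)"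
proof -
  define P where "P = (\<lambda>I. ilen I = Max (ilen ` set S))"
  define Q where "Q i \<longleftrightarrow> i < length S \<and> (\<forall>k<length S. ilen (S ! k) \<le> ilen (S ! i))" for i
  have P_iff_Q: "P (S ! i) \<longleftrightarrow> Q i" if "i < length S" for i
    using that assms unfolding P_def Q_def
    by (simp only: eq_commute[of "ilen _"]) (simp add: Max_eq_iff all_set_conv_all_nth)
  have "Max (ilen ` set S) \<in> ilen ` set S" using assms by (intro Max_in) auto
  then obtain i where "i < length S" "P (S ! i)"
    by (auto simp: P_def in_set_conv_nth)
  then have "Q i" using P_iff_Q by blast
  moreover have "largest_index S = (LEAST i. Q i)" by (simp add: largest_index_def Q_def)
  ultimately have m: "Q (largest_index S)" "\<And>j. j < largest_index S \<Longrightarrow> \<not> Q j"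
    by (auto intro: LeastI dest: not_less_Least)
  then show less: "largest_index S < length S" by (simp add: Q_def)
  have first: "P (S ! largest_index S)" "\<And>j. j < largest_index S \<Longrightarrow> \<not> P (S ! j)"
    using m less P_iff_Q by auto
  show "largest S = S ! largest_index S"
    using hd_filter_eq_nth[where P=P, OF less first] by (simp add: largest_def P_def)
  then show "remove1 (largest S) S = take (largest_index S) S @ drop (Suc (largest_index S)) S"
    using remove1_nth_eq_take_drop[where P=P, OF less first] by simp
  show "I \<in> set S \<Longrightarrow> ilen I \<le> ilen (largest S)"
    using m(1) \<open>largest S = _\<close> by (auto simp: Q_def in_set_conv_nth)
qed

lemma nonstopped_largest:
  assumes "\<not> stopped xc S"
  shows "largest S \<in> set S" and "xc < ilen (largest S)"
proof -
  have "S \<noteq> []" using assms by (auto simp: stopped_def)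
  then show "largest S \<in> set S"
    by (simp add: largest_conv_nth largest_index_less)
  obtain I where "I \<in> set S" "xc < ilen I" using assms by (auto simp: stopped_def not_le)
  then show "xc < ilen (largest S)"
    using ilen_le_largest[OF \<open>S \<noteq> []\<close>] by fastforce
qed

definition kak_step :: "real \<Rightarrow> (real \<times> real) list \<Rightarrow> (real \<times> real) list" where
  "kak_step t S = remove1 (largest S) S @ split_at t (largest S)"

lemma kak_state_Suc_eq:
  "kak_state xc u (Suc j) =
     (if stopped xc (kak_state xc u j) then kak_state xc u j else kak_step (u j) (kak_state xc u j))"
  by (simp add: Let_def kak_step_def)

lemma length_kak_step: "S \<noteq> [] \<Longrightarrow> length (kak_step t S) = Suc (length S)"
  using largest_index_less[of S] by (simp add: kak_step_def remove1_largest split_at_def)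

lemma nth_default_kak_step:
  fixes d :: "real \<times> real"
  assumes S: "S \<noteq> []"
  defines "m \<equiv> largest_index S" and "L \<equiv> nth_default d S (largest_index S)"
  shows "nth_default d (kak_step t S) i =
    (if i + 1 < length S then nth_default d S (if i < m then i else Suc i)
     else if i + 1 = length S then (fst L, fst L + t * ilen L)
     else if i = length S then (fst L + t * ilen L, snd L)
     else d)"
proof -
  have "m < length S" using S by (simp add: m_def largest_index_less)
  moreover have "kak_step t S = take m S @ drop (Suc m) S @ split_at t L"
    using \<open>m < length S\<close> unfolding kak_step_def remove1_largest[OF S]
    unfolding largest_conv_nth[OF S] by (simp add: m_def L_def nth_default_nth)
  ultimately show ?thesis
    by (auto simp: nth_default_def nth_append split_at_def nth_Cons' not_less)
qed

section \<open>Measurability of the process\<close>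

(* Lists of reals carry no standard sigma algebra, so a random state is measured through its
   length and its coordinates, padded with (0, 0). *)
definition measurable_state :: "'a measure \<Rightarrow> ('a \<Rightarrow> (real \<times> real) list) \<Rightarrow> bool" where
  "measurable_state M \<Phi> \<longleftrightarrow> (\<lambda>x. length (\<Phi> x)) \<in> measurable M (count_space UNIV) \<and>
     (\<forall>i. (\<lambda>x. fst (nth_default (0, 0) (\<Phi> x) i)) \<in> borel_measurable M \<and>
          (\<lambda>x. snd (nth_default (0, 0) (\<Phi> x) i)) \<in> borel_measurable M)"

lemma measurable_stateD:
  assumes "measurable_state M \<Phi>"
  shows "(\<lambda>x. length (\<Phi> x)) \<in> measurable M (count_space UNIV)"
    and "(\<lambda>x. fst (nth_default (0, 0) (\<Phi> x) i)) \<in> borel_measurable M"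
    and "(\<lambda>x. snd (nth_default (0, 0) (\<Phi> x) i)) \<in> borel_measurable M"
  using assms by (simp_all add: measurable_state_def)

lemma measurable_state_at_index:
  assumes "measurable_state M \<Phi>" and h: "h \<in> measurable M (count_space UNIV)"
  shows "(\<lambda>x. fst (nth_default (0, 0) (\<Phi> x) (h x))) \<in> borel_measurable M"
    and "(\<lambda>x. snd (nth_default (0, 0) (\<Phi> x) (h x))) \<in> borel_measurable M"
  using measurable_stateD(2,3)[OF assms(1)] by (auto intro: measurable_compose_countable[OF _ h])

lemma pred_stopped:
  assumes "measurable_state M \<Phi>"
  shows "Measurable.pred M (\<lambda>x. stopped xc (\<Phi> x))"
proof -
  note [measurable] = measurable_stateD[OF assms]
  have "stopped xc S \<longleftrightarrow> (\<forall>i<length S. ilen (nth_default (0, 0) S i) \<le> xc)" for S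
    by (simp add: stopped_def all_set_conv_all_nth nth_default_nth)
  then show ?thesis by (simp only: ilen_def) measurable
qed

lemma measurable_largest_index:
  assumes "measurable_state M \<Phi>"
  shows "(\<lambda>x. largest_index (\<Phi> x)) \<in> measurable M (count_space UNIV)"
proof -
  note [measurable] = measurable_stateD[OF assms]
  have "largest_index S = (LEAST i. i < length S \<and>
      (\<forall>k<length S. ilen (nth_default (0, 0) S k) \<le> ilen (nth_default (0, 0) S i)))" for S
    by (simp add: largest_index_def nth_default_nth cong: conj_cong)
  then show ?thesis by (simp only: ilen_def) measurable
qed

lemma measurable_state_kak_step:
  assumes \<Phi>: "measurable_state M \<Phi>" and [measurable]: "v \<in> borel_measurable M"
  shows "measurable_state M (\<lambda>x. if stopped xc (\<Phi> x) then \<Phi> x else kak_step (v x) (\<Phi> x))"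
    (is "measurable_state M ?\<Psi>")
proof -
  have ne: "\<not> stopped xc S \<Longrightarrow> S \<noteq> []" for S by (auto simp: stopped_def)
  note [measurable] = measurable_stateD[OF \<Phi>] pred_stopped[OF \<Phi>]
    measurable_largest_index[OF \<Phi>] measurable_state_at_index[OF \<Phi>]
  have "(\<lambda>x. length (?\<Psi> x)) =
      (\<lambda>x. if stopped xc (\<Phi> x) then length (\<Phi> x) else Suc (length (\<Phi> x)))"
    using length_kak_step ne by auto
  moreover have "(\<lambda>x. if stopped xc (\<Phi> x) then length (\<Phi> x) else Suc (length (\<Phi> x)))
      \<in> measurable M (count_space UNIV)"
    by measurable
  moreover have "(\<lambda>x. fst (nth_default (0, 0) (?\<Psi> x) i)) \<in> borel_measurable M \<and>
      (\<lambda>x. snd (nth_default (0, 0) (?\<Psi> x) i)) \<in> borel_measurable M" for i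
  proof -
    let ?m = "\<lambda>x. largest_index (\<Phi> x)"
    let ?L = "\<lambda>x. nth_default (0, 0) (\<Phi> x) (?m x)"
    have "nth_default (0, 0) (?\<Psi> x) i =
      (if stopped xc (\<Phi> x) then nth_default (0, 0) (\<Phi> x) i
       else if i + 1 < length (\<Phi> x) then nth_default (0, 0) (\<Phi> x) (if i < ?m x then i else Suc i)
       else if i + 1 = length (\<Phi> x) then (fst (?L x), fst (?L x) + v x * (snd (?L x) - fst (?L x)))
       else if i = length (\<Phi> x) then (fst (?L x) + v x * (snd (?L x) - fst (?L x)), snd (?L x))
       else (0, 0))" for x
      using nth_default_kak_step[OF ne] by (simp add: ilen_def)
    then show ?thesis
      by (simp only: if_distrib[of fst] if_distrib[of snd] fst_conv snd_conv) measurable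
  qed
  ultimately show ?thesis unfolding measurable_state_def by simp
qed

lemma measurable_state_kak_state:
  assumes "\<And>i. (\<lambda>x. V x i) \<in> borel_measurable M"
  shows "measurable_state M (\<lambda>x. kak_state xc (V x) j)"
proof (induction j)
  case 0
  show ?case by (simp add: measurable_state_def nth_default_def)
next
  case (Suc j)
  then show ?case unfolding kak_state_Suc_eq by (rule measurable_state_kak_step[OF _ assms])
qed

section \<open>The subinterval containing y\<close>

definition contains :: "real \<times> real \<Rightarrow> real \<Rightarrow> bool" where
  "contains I y \<longleftrightarrow> fst I < y \<and> y < snd I"

definition split_weight :: "real \<Rightarrow> real" where
  "split_weight t = max t (1 - t)"

lemma split_weight_pos: "0 < split_weight t"
  by (auto simp: split_weight_def max_def)

lemma split_weight_le_1: "t \<in> {0..1} \<Longrightarrow> split_weight t \<le> 1"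
  by (simp add: split_weight_def)

lemma ilen_split_at_le:
  assumes "t \<in> {0..1}" "0 \<le> ilen I" "J \<in> set (split_at t I)"
  shows "ilen J \<le> split_weight t * ilen I"
proof -
  have "t * ilen I \<le> split_weight t * ilen I" "(1 - t) * ilen I \<le> split_weight t * ilen I"
    using assms(2) by (simp_all add: split_weight_def mult_right_mono)
  then show ?thesis
    using assms(3) by (auto simp: split_at_def ilen_def algebra_simps)
qed

lemma contains_split_at:
  assumes "t \<in> {0..1}" "0 \<le> ilen I" "J \<in> set (split_at t I)" "contains J y"
  shows "contains I y"
proof -
  have "0 \<le> t * ilen I" "t * ilen I \<le> ilen I"
    using assms(1,2) by (simp_all add: mult_left_le_one_le)
  then show ?thesis
    using assms(3,4) by (auto simp: split_at_def contains_def ilen_def)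
qed

lemma length_filter_contains_split_at: "length (filter (\<lambda>J. contains J y) (split_at t I)) \<le> 1"
  by (auto simp: split_at_def contains_def)

definition y_interval_bound :: "real \<Rightarrow> real \<Rightarrow> (real \<times> real) list \<Rightarrow> bool" where
  "y_interval_bound y p S \<longleftrightarrow> length (filter (\<lambda>I. contains I y) S) \<le> 1 \<and>
     (\<forall>I\<in>set S. contains I y \<longrightarrow> ilen I \<le> p)"

lemma y_interval_bound_kak_step:
  assumes t: "t \<in> {0..1}" and ns: "\<not> stopped xc S" and xc: "0 \<le> xc"
    and bound: "y_interval_bound y p S"
  shows "y_interval_bound y (if contains (largest S) y then split_weight t * p else p) (kak_step t S)"
proof -
  let ?L = "largest S" and ?c = "\<lambda>I. contains I y"
  have L: "?L \<in> set S" "0 \<le> ilen ?L" using nonstopped_largest[OF ns] xc by auto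
  show ?thesis
  proof (cases "?c ?L")
    case True
    have "?L \<in> set (filter ?c S)" using L(1) True by simp
    then have "filter ?c S = [?L]"
      using bound by (cases "filter ?c S") (auto simp: y_interval_bound_def)
    then have "filter ?c (remove1 ?L S) = []"
      by (simp add: filter_remove1)
    then have "\<forall>I\<in>set (remove1 ?L S). \<not> ?c I"
      by (simp add: filter_empty_conv)
    moreover have "ilen J \<le> split_weight t * p" if "J \<in> set (split_at t ?L)" for J
    proof -
      have "ilen ?L \<le> p" using bound L(1) True by (simp add: y_interval_bound_def)
      then have "split_weight t * ilen ?L \<le> split_weight t * p"
        using split_weight_pos[of t] by (simp add: mult_left_mono)
      then show ?thesis using ilen_split_at_le[OF t L(2) that] by linarith
    qed
    ultimately show ?thesis
      using True length_filter_contains_split_at[of y t ?L]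
      by (auto simp: y_interval_bound_def kak_step_def)
  next
    case False
    then have "\<forall>J\<in>set (split_at t ?L). \<not> ?c J"
      using contains_split_at[OF t L(2)] by blast
    moreover have "length (remove1 ?L (filter ?c S)) \<le> 1"
      using bound by (simp add: y_interval_bound_def length_remove1)
    ultimately show ?thesis
      using False bound notin_set_remove1
      by (auto simp: y_interval_bound_def kak_step_def filter_remove1)
  qed
qed

definition y_split :: "real \<Rightarrow> real \<Rightarrow> (nat \<Rightarrow> real) \<Rightarrow> nat \<Rightarrow> bool" where
  "y_split xc y u j \<longleftrightarrow> \<not> stopped xc (kak_state xc u j) \<and> contains (largest (kak_state xc u j)) y"

lemma kak_K_eq_card: "kak_K xc y u = card {j. y_split xc y u j}"
  by (simp add: kak_K_def y_split_def contains_def)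

definition y_weight_prod :: "real \<Rightarrow> real \<Rightarrow> (nat \<Rightarrow> real) \<Rightarrow> nat \<Rightarrow> real" where
  "y_weight_prod xc y u N = (\<Prod>j | j < N \<and> y_split xc y u j. split_weight (u j))"

lemma y_splits_less_Suc:
  "{j. j < Suc N \<and> y_split xc y u j} =
     (if y_split xc y u N then insert N {j. j < N \<and> y_split xc y u j}
      else {j. j < N \<and> y_split xc y u j})"
  by (auto simp: less_Suc_eq)

lemma y_weight_prod_Suc:
  "y_weight_prod xc y u (Suc N) =
     (if y_split xc y u N then split_weight (u N) * y_weight_prod xc y u N else y_weight_prod xc y u N)"
  unfolding y_weight_prod_def y_splits_less_Suc by simp

lemma y_interval_bound_kak_state:
  assumes "\<And>i. u i \<in> {0..1}" "0 < xc"
  shows "y_interval_bound y (y_weight_prod xc y u N) (kak_state xc u N)"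
proof (induction N)
  case 0
  show ?case by (simp add: y_interval_bound_def y_weight_prod_def ilen_def)
next
  case (Suc N)
  then show ?case
    using y_interval_bound_kak_step[OF assms(1) _ _ Suc] assms(2)
    unfolding kak_state_Suc_eq y_weight_prod_Suc y_split_def by auto
qed

lemma y_split_imp_less_y_weight_prod:
  assumes "\<And>i. u i \<in> {0..1}" "0 < xc" "y_split xc y u j"
  shows "xc < y_weight_prod xc y u j"
  using assms(3) nonstopped_largest[of xc "kak_state xc u j"]
    y_interval_bound_kak_state[OF assms(1,2), where y=y and N=j]
  by (force simp: y_split_def y_interval_bound_def)

definition num_y_splits :: "real \<Rightarrow> real \<Rightarrow> (nat \<Rightarrow> real) \<Rightarrow> nat \<Rightarrow> nat" where
  "num_y_splits xc y u N = card {j. j < N \<and> y_split xc y u j}"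

lemma num_y_splits_Suc:
  "num_y_splits xc y u (Suc N) =
     (if y_split xc y u N then Suc (num_y_splits xc y u N) else num_y_splits xc y u N)"
  unfolding num_y_splits_def y_splits_less_Suc by simp

lemma num_y_splits_mono: "i \<le> j \<Longrightarrow> num_y_splits xc y u i \<le> num_y_splits xc y u j"
  unfolding num_y_splits_def by (intro card_mono) auto

lemma num_y_splits_strict_mono:
  "i < j \<Longrightarrow> y_split xc y u i \<Longrightarrow> num_y_splits xc y u i < num_y_splits xc y u j"
  unfolding num_y_splits_def by (intro psubset_card_mono) auto

lemma num_y_splits_eq_kak_K:
  assumes "\<And>j. N \<le> j \<Longrightarrow> \<not> y_split xc y u j"
  shows "num_y_splits xc y u N = kak_K xc y u"
proof -
  have "{j. j < N \<and> y_split xc y u j} = {j. y_split xc y u j}"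
    using assms not_le by blast
  then show ?thesis by (simp add: num_y_splits_def kak_K_eq_card)
qed

lemma less_kak_K_iff:
  "k < kak_K xc y u \<longleftrightarrow> (\<exists>N. (\<forall>j\<ge>N. \<not> y_split xc y u j) \<and> k < num_y_splits xc y u N)"
proof
  assume "k < kak_K xc y u"
  then have "finite {j. y_split xc y u j}"
    by (metis card.infinite kak_K_eq_card less_zeroE)
  then obtain N where "{j. y_split xc y u j} \<subseteq> {..<N}"
    by (meson finite_nat_iff_bounded)
  then have "\<forall>j\<ge>N. \<not> y_split xc y u j" by auto
  with \<open>k < kak_K xc y u\<close> show "\<exists>N. (\<forall>j\<ge>N. \<not> y_split xc y u j) \<and> k < num_y_splits xc y u N"
    using num_y_splits_eq_kak_K by metis
qed (auto simp: num_y_splits_eq_kak_K)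

lemma less_num_y_splits_imp_y_split:
  "k < num_y_splits xc y u N \<Longrightarrow> \<exists>j<N. y_split xc y u j \<and> num_y_splits xc y u j = k"
proof (induction N)
  case 0
  then show ?case by (simp add: num_y_splits_def)
next
  case (Suc N)
  show ?case
  proof (cases "k < num_y_splits xc y u N")
    case True
    then show ?thesis using Suc.IH less_SucI by blast
  next
    case False
    then have "y_split xc y u N \<and> num_y_splits xc y u N = k"
      using Suc.prems by (auto simp: num_y_splits_Suc split: if_splits)
    then show ?thesis by blast
  qed
qed

definition early_y_split :: "real \<Rightarrow> real \<Rightarrow> nat \<Rightarrow> (nat \<Rightarrow> real) \<Rightarrow> nat \<Rightarrow> bool" where
  "early_y_split xc y k u j \<longleftrightarrow> y_split xc y u j \<and> num_y_splits xc y u j < k"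

definition scaled_weight_prod ::
    "real \<Rightarrow> real \<Rightarrow> nat \<Rightarrow> real \<Rightarrow> (nat \<Rightarrow> real) \<Rightarrow> nat \<Rightarrow> real" where
  "scaled_weight_prod xc y k \<rho> u N =
     (\<Prod>j<N. if early_y_split xc y k u j then split_weight (u j) / \<rho> else 1)"

lemma scaled_weight_prod_Suc:
  "scaled_weight_prod xc y k \<rho> u (Suc N) = scaled_weight_prod xc y k \<rho> u N *
     (if early_y_split xc y k u N then split_weight (u N) / \<rho> else 1)"
  by (simp add: scaled_weight_prod_def)

lemma scaled_weight_prod_nonneg: "0 < \<rho> \<Longrightarrow> 0 \<le> scaled_weight_prod xc y k \<rho> u N"
  unfolding scaled_weight_prod_def by (intro prod_nonneg) (simp add: less_imp_le[OF split_weight_pos])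

lemma scaled_weight_prod_le:
  assumes "\<And>i. u i \<in> {0..1}" "0 < \<rho>"
  shows "scaled_weight_prod xc y k \<rho> u N \<le> (1 + 1 / \<rho>) ^ N"
proof -
  have "split_weight (u j) / \<rho> \<le> 1 + 1 / \<rho>" for j
    using split_weight_le_1[OF assms(1)] assms(2) by (simp add: divide_right_mono add_increasing)
  then have "scaled_weight_prod xc y k \<rho> u N \<le> (\<Prod>j<N. 1 + 1 / \<rho>)"
    unfolding scaled_weight_prod_def using assms(2) split_weight_pos
    by (intro prod_mono) (auto intro: less_imp_le)
  then show ?thesis by simp
qed

lemma scaled_weight_prod_gt:
  assumes "\<And>i. u i \<in> {0..1}" "0 < xc" "0 < \<rho>" "k < num_y_splits xc y u N"
  shows "xc / \<rho> ^ k < scaled_weight_prod xc y k \<rho> u N"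
proof -
  obtain j where j: "j < N" "y_split xc y u j" "num_y_splits xc y u j = k"
    using less_num_y_splits_imp_y_split[OF assms(4)] by blast
  have "{..<N} \<inter> {i. early_y_split xc y k u i} = {i. i < j \<and> y_split xc y u i}"
    using j num_y_splits_strict_mono[of _ j xc y u] num_y_splits_mono[of j _ xc y u]
    by (auto simp: early_y_split_def not_less[symmetric])
  then have "scaled_weight_prod xc y k \<rho> u N =
      (\<Prod>i | i < j \<and> y_split xc y u i. split_weight (u i) / \<rho>)"
    unfolding scaled_weight_prod_def by (simp add: prod.If_cases)
  also have "\<dots> = y_weight_prod xc y u j / \<rho> ^ k"
    using j(3) by (simp add: y_weight_prod_def prod_dividef num_y_splits_def)
  finally show ?thesis
    using y_split_imp_less_y_weight_prod[OF assms(1,2) j(2)] assms(3)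
    by (simp add: divide_strict_right_mono)
qed

lemma kak_state_cong: "(\<And>i. i < j \<Longrightarrow> u i = v i) \<Longrightarrow> kak_state xc u j = kak_state xc v j"
  by (induction j) (auto simp: Let_def)

lemma y_split_cong: "(\<And>i. i < j \<Longrightarrow> u i = v i) \<Longrightarrow> y_split xc y u j = y_split xc y v j"
  unfolding y_split_def using kak_state_cong[of j u v xc] by simp

lemma num_y_splits_cong:
  "(\<And>i. i < N \<Longrightarrow> u i = v i) \<Longrightarrow> num_y_splits xc y u N = num_y_splits xc y v N"
  unfolding num_y_splits_def by (metis (no_types, lifting) less_trans y_split_cong)

lemma early_y_split_cong:
  "(\<And>i. i < j \<Longrightarrow> u i = v i) \<Longrightarrow> early_y_split xc y k u j = early_y_split xc y k v j"
  unfolding early_y_split_def using y_split_cong num_y_splits_cong by metis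

lemma scaled_weight_prod_cong:
  "(\<And>i. i < N \<Longrightarrow> u i = v i) \<Longrightarrow> scaled_weight_prod xc y k \<rho> u N = scaled_weight_prod xc y k \<rho> v N"
  unfolding scaled_weight_prod_def
  by (intro prod.cong refl) (metis lessThan_iff less_trans early_y_split_cong)

context
  fixes M :: "'a measure" and V :: "'a \<Rightarrow> nat \<Rightarrow> real"
  assumes V: "\<And>i. (\<lambda>x. V x i) \<in> borel_measurable M"
begin

lemma pred_y_split: "Measurable.pred M (\<lambda>x. y_split xc y (V x) j)"
proof -
  note \<Phi> = measurable_state_kak_state[OF V, where xc=xc and j=j]
  note [measurable] = pred_stopped[OF \<Phi>]
    measurable_state_at_index[OF \<Phi> measurable_largest_index[OF \<Phi>]]
  have "y_split xc y u j \<longleftrightarrow> \<not> stopped xc (kak_state xc u j) \<and>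
      contains (nth_default (0, 0) (kak_state xc u j) (largest_index (kak_state xc u j))) y" for u
  proof (cases "stopped xc (kak_state xc u j)")
    case False
    then have "kak_state xc u j \<noteq> []" by (auto simp: stopped_def)
    then show ?thesis
      using False by (simp add: y_split_def largest_conv_nth largest_index_less nth_default_nth)
  qed (simp add: y_split_def)
  then show ?thesis by (simp only: contains_def) measurable
qed

lemma measurable_num_y_splits:
  "(\<lambda>x. num_y_splits xc y (V x) N) \<in> measurable M (count_space UNIV)"
proof (induction N)
  case 0
  show ?case by (simp add: num_y_splits_def)
next
  case (Suc N)
  note [measurable] = Suc pred_y_split
  show ?case unfolding num_y_splits_Suc by measurable
qed

lemma pred_less_kak_K: "Measurable.pred M (\<lambda>x. k < kak_K xc y (V x))"
proof -
  note [measurable] = pred_y_split measurable_num_y_splits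
  show ?thesis unfolding less_kak_K_iff by measurable
qed

lemma pred_early_y_split: "Measurable.pred M (\<lambda>x. early_y_split xc y k (V x) j)"
proof -
  note [measurable] = pred_y_split measurable_num_y_splits
  show ?thesis unfolding early_y_split_def by measurable
qed

lemma borel_measurable_scaled_weight_prod:
  "(\<lambda>x. scaled_weight_prod xc y k \<rho> (V x) N) \<in> borel_measurable M"
proof -
  note [measurable] = V pred_early_y_split
  show ?thesis unfolding scaled_weight_prod_def split_weight_def by measurable
qed

end

section \<open>A supermartingale\<close>

lemma (in prob_space) expectation_mult_indep_next:
  fixes U :: "nat \<Rightarrow> 'a \<Rightarrow> real" and f :: "(nat \<Rightarrow> real) \<Rightarrow> real"
  assumes indep: "indep_vars (\<lambda>_. borel) U UNIV"
    and f: "f \<in> borel_measurable (Pi\<^sub>M UNIV (\<lambda>_. borel))"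
    and f_local: "\<And>u v. (\<And>i. i < N \<Longrightarrow> u i = v i) \<Longrightarrow> f u = f v"
    and g: "g \<in> borel_measurable borel"
    and int_f: "integrable M (\<lambda>\<omega>. f (\<lambda>i. U i \<omega>))" and int_g: "integrable M (\<lambda>\<omega>. g (U N \<omega>))"
  shows "integrable M (\<lambda>\<omega>. f (\<lambda>i. U i \<omega>) * g (U N \<omega>))"
    and "expectation (\<lambda>\<omega>. f (\<lambda>i. U i \<omega>) * g (U N \<omega>)) =
      expectation (\<lambda>\<omega>. f (\<lambda>i. U i \<omega>)) * expectation (\<lambda>\<omega>. g (U N \<omega>))"
proof -
  define pad :: "(nat \<Rightarrow> real) \<Rightarrow> nat \<Rightarrow> real" where "pad h i = (if i < N then h i else 0)" for h i
  have "(\<lambda>h. if i < N then h i else 0::real) \<in> borel_measurable (Pi\<^sub>M {..<N} (\<lambda>_. borel))" for i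
    by (cases "i < N") simp_all
  then have "pad \<in> measurable (Pi\<^sub>M {..<N} (\<lambda>_. borel)) (Pi\<^sub>M UNIV (\<lambda>_. borel))"
    unfolding pad_def by (intro measurable_PiM_single') simp_all
  then have m1: "f \<circ> pad \<in> borel_measurable (Pi\<^sub>M {..<N} (\<lambda>_. borel))"
    using f by (rule measurable_comp)
  have m2: "(\<lambda>h. g (h N)) \<in> borel_measurable (Pi\<^sub>M {N} (\<lambda>_. borel))"
    using g by measurable
  have "indep_var (Pi\<^sub>M {..<N} (\<lambda>_. borel)) (\<lambda>\<omega>. restrict (\<lambda>i. U i \<omega>) {..<N})
      (Pi\<^sub>M {N} (\<lambda>_. borel)) (\<lambda>\<omega>. restrict (\<lambda>i. U i \<omega>) {N})"
    by (rule indep_var_restrict[OF indep]) auto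
  from indep_var_compose[OF this m1 m2]
  have "indep_var borel ((f \<circ> pad) \<circ> (\<lambda>\<omega>. restrict (\<lambda>i. U i \<omega>) {..<N}))
      borel ((\<lambda>h. g (h N)) \<circ> (\<lambda>\<omega>. restrict (\<lambda>i. U i \<omega>) {N}))" .
  moreover have "(f \<circ> pad) \<circ> (\<lambda>\<omega>. restrict (\<lambda>i. U i \<omega>) {..<N}) = (\<lambda>\<omega>. f (\<lambda>i. U i \<omega>))"
    by (rule ext, simp only: comp_def, rule f_local) (simp add: pad_def)
  moreover have "(\<lambda>h. g (h N)) \<circ> (\<lambda>\<omega>. restrict (\<lambda>i. U i \<omega>) {N}) = (\<lambda>\<omega>. g (U N \<omega>))"
    by (simp add: comp_def)
  ultimately have "indep_var borel (\<lambda>\<omega>. f (\<lambda>i. U i \<omega>)) borel (\<lambda>\<omega>. g (U N \<omega>))"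
    by simp
  then show "integrable M (\<lambda>\<omega>. f (\<lambda>i. U i \<omega>) * g (U N \<omega>))"
    and "expectation (\<lambda>\<omega>. f (\<lambda>i. U i \<omega>) * g (U N \<omega>)) =
      expectation (\<lambda>\<omega>. f (\<lambda>i. U i \<omega>)) * expectation (\<lambda>\<omega>. g (U N \<omega>))"
    using int_f int_g by (simp_all add: indep_var_integrable indep_var_lebesgue_integral)
qed

lemma (in prob_space) integrable_scaled_weight_prod:
  assumes U: "\<And>i. U i \<in> borel_measurable M" and range: "AE \<omega> in M. \<forall>i. U i \<omega> \<in> {0..1}"
    and \<rho>: "0 < \<rho>"
  shows "integrable M (\<lambda>\<omega>. scaled_weight_prod xc y k \<rho> (\<lambda>i. U i \<omega>) N)"
proof (rule integrable_const_bound)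
  show "AE \<omega> in M. norm (scaled_weight_prod xc y k \<rho> (\<lambda>i. U i \<omega>) N) \<le> (1 + 1 / \<rho>) ^ N"
    using range by eventually_elim
      (simp add: \<rho> scaled_weight_prod_le abs_of_nonneg[OF scaled_weight_prod_nonneg])
  show "(\<lambda>\<omega>. scaled_weight_prod xc y k \<rho> (\<lambda>i. U i \<omega>) N) \<in> borel_measurable M"
    using U by (rule borel_measurable_scaled_weight_prod)
qed

lemma (in prob_space) expectation_scaled_weight_prod_Suc_le:
  assumes indep: "indep_vars (\<lambda>_. borel) U UNIV"
    and range: "AE \<omega> in M. \<forall>i. U i \<omega> \<in> {0..1}"
    and mean: "expectation (\<lambda>\<omega>. split_weight (U N \<omega>)) \<le> \<rho>" and \<rho>: "0 < \<rho>"
  shows "expectation (\<lambda>\<omega>. scaled_weight_prod xc y k \<rho> (\<lambda>i. U i \<omega>) (Suc N))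
    \<le> expectation (\<lambda>\<omega>. scaled_weight_prod xc y k \<rho> (\<lambda>i. U i \<omega>) N)"
proof -
  have U[measurable]: "U i \<in> borel_measurable M" for i
    using indep by (simp add: indep_vars_def)
  have coord: "(\<lambda>u. u i) \<in> borel_measurable (Pi\<^sub>M UNIV (\<lambda>_. borel))" for i
    by simp
  note [measurable] =
    borel_measurable_scaled_weight_prod[of "\<lambda>u. u", OF coord] pred_early_y_split[of "\<lambda>u. u", OF coord]
    borel_measurable_scaled_weight_prod[of "\<lambda>\<omega> i. U i \<omega>", OF U]
    pred_early_y_split[of "\<lambda>\<omega> i. U i \<omega>", OF U]
  define Q where "Q u = scaled_weight_prod xc y k \<rho> u N" for u
  define F where "F u = (if early_y_split xc y k u N then Q u else 0)" for u
  define g where "g t = split_weight t / \<rho>" for t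
  have F_meas: "F \<in> borel_measurable (Pi\<^sub>M UNIV (\<lambda>_. borel))"
    unfolding F_def Q_def by measurable
  have F_U_meas: "(\<lambda>\<omega>. F (\<lambda>i. U i \<omega>)) \<in> borel_measurable M"
    unfolding F_def Q_def by measurable
  have g_meas: "g \<in> borel_measurable borel"
    unfolding g_def split_weight_def by measurable
  have F_local: "F u = F v" if "\<And>i. i < N \<Longrightarrow> u i = v i" for u v
    using scaled_weight_prod_cong[OF that] early_y_split_cong[OF that] by (simp add: F_def Q_def)
  have int_Q: "integrable M (\<lambda>\<omega>. Q (\<lambda>i. U i \<omega>))"
    unfolding Q_def using U range \<rho> by (rule integrable_scaled_weight_prod)
  have int_F: "integrable M (\<lambda>\<omega>. F (\<lambda>i. U i \<omega>))"
    using int_Q F_U_meas by (rule Bochner_Integration.integrable_bound) (simp add: F_def)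
  have "AE \<omega> in M. norm (g (U N \<omega>)) \<le> 1 / \<rho>"
    using range by eventually_elim
      (auto simp: g_def abs_of_pos[OF \<rho>] abs_of_pos[OF split_weight_pos]
        intro!: divide_right_mono split_weight_le_1 less_imp_le[OF \<rho>])
  then have int_g: "integrable M (\<lambda>\<omega>. g (U N \<omega>))"
    using measurable_compose[OF U g_meas] by (intro integrable_const_bound) simp_all
  note indep_product = expectation_mult_indep_next[OF indep F_meas F_local g_meas int_F int_g]
  have "0 \<le> expectation (\<lambda>\<omega>. F (\<lambda>i. U i \<omega>))"
    by (rule Bochner_Integration.integral_nonneg) (simp add: F_def Q_def scaled_weight_prod_nonneg \<rho>)
  moreover have "expectation (\<lambda>\<omega>. g (U N \<omega>)) \<le> 1"
    using mean \<rho> by (simp add: g_def)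
  ultimately have "expectation (\<lambda>\<omega>. F (\<lambda>i. U i \<omega>)) * expectation (\<lambda>\<omega>. g (U N \<omega>))
      \<le> expectation (\<lambda>\<omega>. F (\<lambda>i. U i \<omega>))"
    by (simp add: mult_left_le)
  moreover have "scaled_weight_prod xc y k \<rho> u (Suc N) = (Q u - F u) + F u * g (u N)" for u
    by (simp add: scaled_weight_prod_Suc Q_def F_def g_def)
  then have "expectation (\<lambda>\<omega>. scaled_weight_prod xc y k \<rho> (\<lambda>i. U i \<omega>) (Suc N)) =
      expectation (\<lambda>\<omega>. Q (\<lambda>i. U i \<omega>)) - expectation (\<lambda>\<omega>. F (\<lambda>i. U i \<omega>)) +
      expectation (\<lambda>\<omega>. F (\<lambda>i. U i \<omega>)) * expectation (\<lambda>\<omega>. g (U N \<omega>))"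
    using int_Q int_F indep_product by simp
  ultimately show ?thesis unfolding Q_def by linarith
qed

lemma (in prob_space) expectation_scaled_weight_prod_le_1:
  assumes indep: "indep_vars (\<lambda>_. borel) U UNIV"
    and range: "AE \<omega> in M. \<forall>i. U i \<omega> \<in> {0..1}"
    and mean: "\<And>i. expectation (\<lambda>\<omega>. split_weight (U i \<omega>)) \<le> \<rho>" and \<rho>: "0 < \<rho>"
  shows "expectation (\<lambda>\<omega>. scaled_weight_prod xc y k \<rho> (\<lambda>i. U i \<omega>) N) \<le> 1"
proof (induction N)
  case 0
  show ?case by (simp add: scaled_weight_prod_def prob_space)
next
  case (Suc N)
  then show ?case
    using expectation_scaled_weight_prod_Suc_le[OF indep range mean \<rho>] by (rule order_trans[rotated])
qed

lemma (in prob_space) prob_less_num_y_splits_le: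
  assumes indep: "indep_vars (\<lambda>_. borel) U UNIV"
    and range: "AE \<omega> in M. \<forall>i. U i \<omega> \<in> {0..1}"
    and mean: "\<And>i. expectation (\<lambda>\<omega>. split_weight (U i \<omega>)) \<le> \<rho>"
    and \<rho>: "0 < \<rho>" and xc: "0 < xc"
  shows "prob {\<omega> \<in> space M. k < num_y_splits xc y (\<lambda>i. U i \<omega>) N} \<le> \<rho> ^ k / xc"
proof -
  have U[measurable]: "U i \<in> borel_measurable M" for i
    using indep by (simp add: indep_vars_def)
  note [measurable] = borel_measurable_scaled_weight_prod[of "\<lambda>\<omega> i. U i \<omega>", OF U]
  let ?Q = "\<lambda>\<omega>. scaled_weight_prod xc y k \<rho> (\<lambda>i. U i \<omega>) N"
  have c: "0 < xc / \<rho> ^ k" using xc \<rho> by simp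
  have "prob {\<omega> \<in> space M. k < num_y_splits xc y (\<lambda>i. U i \<omega>) N}
      \<le> prob {\<omega> \<in> space M. xc / \<rho> ^ k \<le> ?Q \<omega>}"
    using range by (intro finite_measure_mono_AE)
      (auto simp: xc \<rho> intro!: less_imp_le scaled_weight_prod_gt elim!: eventually_mono)
  also have "\<dots> \<le> expectation ?Q / (xc / \<rho> ^ k)"
    using integrable_scaled_weight_prod[OF U range \<rho>] c
    by (intro integral_Markov_inequality_measure[where A="space M"])
      (simp_all add: scaled_weight_prod_nonneg \<rho>)
  also have "\<dots> \<le> 1 / (xc / \<rho> ^ k)"
    using expectation_scaled_weight_prod_le_1[OF indep range mean \<rho>] c
    by (intro divide_right_mono) simp_all
  finally show ?thesis by simp
qed

theorem (in prob_space) prob_less_kak_K_le: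
  assumes indep: "indep_vars (\<lambda>_. borel) U UNIV"
    and range: "AE \<omega> in M. \<forall>i. U i \<omega> \<in> {0..1}"
    and mean: "\<And>i. expectation (\<lambda>\<omega>. split_weight (U i \<omega>)) \<le> \<rho>"
    and \<rho>: "0 < \<rho>" and xc: "0 < xc"
  shows "prob {\<omega> \<in> space M. k < kak_K xc y (\<lambda>i. U i \<omega>)} \<le> \<rho> ^ k / xc"
proof -
  have U: "U i \<in> borel_measurable M" for i
    using indep by (simp add: indep_vars_def)
  note [measurable] = measurable_num_y_splits[of "\<lambda>\<omega> i. U i \<omega>", OF U]
  define E where "E N = {\<omega> \<in> space M. k < num_y_splits xc y (\<lambda>i. U i \<omega>) N}" for N
  have E_events: "E N \<in> events" for N
    unfolding E_def by measurable
  have "incseq E"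
    unfolding incseq_def E_def using num_y_splits_mono by (blast intro: order_less_le_trans)
  then have "(\<lambda>N. prob (E N)) \<longlonglongrightarrow> prob (\<Union>N. E N)"
    using E_events by (intro finite_Lim_measure_incseq) auto
  then have "prob (\<Union>N. E N) \<le> \<rho> ^ k / xc"
    using prob_less_num_y_splits_le[OF assms] by (intro LIMSEQ_le_const2) (auto simp: E_def)
  moreover have "prob {\<omega> \<in> space M. k < kak_K xc y (\<lambda>i. U i \<omega>)} \<le> prob (\<Union>N. E N)"
    using E_events by (intro finite_measure_mono) (auto simp: E_def less_kak_K_iff)
  ultimately show ?thesis by linarith
qed

lemma (in prob_space) uniform_01_split_weight:
  assumes X[measurable]: "X \<in> borel_measurable M"
    and unif: "distr M lborel X = uniform_measure lborel {0..1}"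
  shows AE_uniform_01: "AE \<omega> in M. X \<omega> \<in> {0..1}"
    and expectation_split_weight_uniform_01: "expectation (\<lambda>\<omega>. split_weight (X \<omega>)) \<le> 7 / 8"
proof -
  have [measurable]: "X \<in> measurable M lborel" using X by simp
  have "AE t in distr M lborel X. t \<in> {0..1}"
    unfolding unif by (rule AE_uniform_measureI) auto
  then show range: "AE \<omega> in M. X \<omega> \<in> {0..1}"
    by (subst (asm) AE_distr_iff) simp_all
  define A where "A = {\<omega> \<in> space M. X \<omega> \<in> {1/4..3/4}}"
  have A[measurable]: "A \<in> events" unfolding A_def by measurable
  have "prob A = measure (distr M lborel X) {1/4..3/4}"
    by (simp add: measure_distr A_def vimage_def Int_def conj_commute)
  also have "\<dots> = 1 / 2"
    unfolding unif by (simp add: measure_uniform_measure)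
  finally have prob_A: "prob A = 1 / 2" .
  have "AE \<omega> in M. split_weight (X \<omega>) \<le> 1 - indicator A \<omega> / 4"
    using range by eventually_elim (auto simp: split_weight_def A_def indicator_def)
  then have "expectation (\<lambda>\<omega>. split_weight (X \<omega>))
      \<le> expectation (\<lambda>\<omega>. 1 - indicator A \<omega> / 4 :: real)"
  proof (rule integral_mono_AE[rotated 2])
    show "integrable M (\<lambda>\<omega>. split_weight (X \<omega>))"
      using range by (intro integrable_const_bound[where B=1])
        (auto simp: split_weight_def elim!: eventually_mono)
    show "integrable M (\<lambda>\<omega>. 1 - indicator A \<omega> / 4 :: real)"
      by (intro integrable_const_bound[where B=1]) (auto simp: indicator_def)
  qed
  also have "\<dots> = 1 - prob A / 4"
    using A by (subst Bochner_Integration.integral_diff) (auto simp: prob_space emeasure_eq_measure)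
  also have "\<dots> = 7 / 8"
    using prob_A by simp
  finally show "expectation (\<lambda>\<omega>. split_weight (X \<omega>)) \<le> 7 / 8" .
qed

lemma geometric_le_powr:
  fixes \<rho> xc A :: real
  assumes \<rho>: "0 < \<rho>" "\<rho> < 1" and xc: "0 < xc" "xc < 1" and A: "-1 \<le> A"
  shows "\<rho> ^ nat \<lfloor>(A + 1) / ln (1 / \<rho>) * ln (1 / xc)\<rfloor> / xc \<le> xc powr A / \<rho>"
proof -
  define L where "L = ln (1 / xc)"
  define l where "l = ln (1 / \<rho>)"
  define k where "k = nat \<lfloor>(A + 1) / l * L\<rfloor>"
  have "0 < L" "0 < l" "ln \<rho> = - l" using xc \<rho> by (simp_all add: L_def l_def ln_div)
  then have "(A + 1) / l * L - 1 \<le> k"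
    using A unfolding k_def by linarith
  then have "l * ((A + 1) / l * L - 1) \<le> l * k"
    using \<open>0 < l\<close> by (intro mult_left_mono) simp_all
  moreover have "l * ((A + 1) / l * L - 1) = (A + 1) * L - l"
    using \<open>0 < l\<close> by (simp add: field_simps)
  ultimately have "k * ln \<rho> \<le> -(A + 1) * L - ln \<rho>"
    using \<open>ln \<rho> = - l\<close> by (simp add: algebra_simps)
  then have "\<rho> ^ k \<le> exp (-(A + 1) * L - ln \<rho>)"
    using \<rho> by (simp add: exp_of_nat_mult[symmetric] powr_realpow[symmetric] powr_def mult.commute)
  also have "\<dots> = xc powr (A + 1) / \<rho>"
    using xc \<rho> by (simp add: L_def ln_div powr_def exp_diff algebra_simps)
  also have "\<dots> = xc * xc powr A / \<rho>"
    using xc by (simp add: powr_add)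
  finally show ?thesis
    using xc unfolding k_def L_def l_def by (simp add: divide_le_eq mult.commute)
qed

theorem (in prob_space) prob_kak_K_gt_log_le:
  assumes indep: "indep_vars (\<lambda>_. borel) U UNIV"
    and unif: "\<And>i. distr M lborel (U i) = uniform_measure lborel {0..1}"
    and xc: "0 < xc" "xc < 1" and A: "-1 \<le> A"
  shows "prob {\<omega> \<in> space M. real (kak_K xc y (\<lambda>i. U i \<omega>)) > (A + 1) / ln (8 / 7) * ln (1 / xc)}
    \<le> 8 / 7 * xc powr A"
proof -
  define k where "k = nat \<lfloor>(A + 1) / ln (8 / 7) * ln (1 / xc)\<rfloor>"
  have U: "U i \<in> borel_measurable M" for i
    using indep by (simp add: indep_vars_def)
  have "0 \<le> (A + 1) / ln (8 / 7) * ln (1 / xc)"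
    using A xc by simp
  then have "real k \<le> (A + 1) / ln (8 / 7) * ln (1 / xc)"
    unfolding k_def by linarith
  then have "prob {\<omega> \<in> space M. real (kak_K xc y (\<lambda>i. U i \<omega>)) > (A + 1) / ln (8 / 7) * ln (1 / xc)}
      \<le> prob {\<omega> \<in> space M. k < kak_K xc y (\<lambda>i. U i \<omega>)}"
    using pred_less_kak_K[of "\<lambda>\<omega> i. U i \<omega>", OF U] by (intro finite_measure_mono) auto
  also have "\<dots> \<le> (7 / 8) ^ k / xc"
  proof (rule prob_less_kak_K_le[OF indep])
    show "AE \<omega> in M. \<forall>i. U i \<omega> \<in> {0..1}"
      using AE_uniform_01[OF U unif] by (simp add: AE_all_countable)
    show "expectation (\<lambda>\<omega>. split_weight (U i \<omega>)) \<le> 7 / 8" for i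
      using expectation_split_weight_uniform_01[OF U unif] .
  qed (use xc in simp_all)
  also have "\<dots> \<le> 8 / 7 * xc powr A"
    using geometric_le_powr[of "7 / 8" xc A] xc A by (simp add: k_def)
  finally show ?thesis .
qed

theorem lemma1:
  fixes y :: real and A :: real
  assumes "0 < y" "y < 1" "0 < A"
  shows "\<exists>C D::real. \<forall>(M::'a measure) (U :: nat \<Rightarrow> 'a \<Rightarrow> real) (xc::real).
     prob_space M \<and> prob_space.indep_vars M (\<lambda>_. borel) U UNIV \<and>
     (\<forall>i. distr M lborel (U i) = uniform_measure lborel {0..1}) \<and>
     0 < xc \<and> xc < 1 \<longrightarrow>
     measure M {\<omega> \<in> space M. real (kak_K xc y (\<lambda>i. U i \<omega>)) > C * ln (1 / xc)}
       \<le> D * xc powr A"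
  (* The bound holds for every y. *)
  using prob_space.prob_kak_K_gt_log_le[where y=y and A=A] \<open>0 < A\<close>
  by (intro exI[of _ "(A + 1) / ln (8 / 7)"] exI[of _ "8 / 7"]) auto

end
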